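(* Let $n\ge2$ and on $\mathbf{R}^{n+1}$ minus the $x_{n+1}$-axis consider the $n$-form $$H=\sum_{j=1}^{n+1}(-1)^{j-1}\frac{x_j}{r^{n+1}}\,dx_1\wedge\cdots\wedge\widehat{dx_j}\wedge\cdots\wedge dx_{n+1},\qquad r=\sqrt{\textstyle\sum_{j=1}^{n+1}x_j^2},$$ and the $(n-1)$-form $$B=f(r,x_{n+1})\sum_{j=1}^n(-1)^{n+j}x_j\,dx_1\wedge\cdots\wedge\widehat{dx_j}\wedge\cdots\wedge dx_n,\qquad f(r,x_{n+1})=\int_0^1\frac{2^nt^{n-1}}{\{r-x_{n+1}+t^2(r+x_{n+1})\}^n}\,dt.$$ In polar coordinates $x_1=r\sin\theta_1\cos\theta_2,\ \dots,\ x_{n-1}=r\sin\theta_1\sin\theta_2\cdots\sin\theta_{n-1}\cos\theta_n,\ x_n=r\sin\theta_1\sin\theta_2\cdots\sin\theta_{n-1}\sin\theta_n,\ x_{n+1}=r\cos\theta_1$ (i.e. $x_k=r\sin\theta_1\cdots\sin\theta_k\cos\theta_{k+1}$ for $1\le k\le n-1$), one has $$H=(-1)^n\sin^{n-1}\theta_1\sin^{n-2}\theta_2\cdots\sin\theta_{n-1}\,d\theta_1\wedge\cdots\wedge d\theta_n,$$ $$B=(-1)^n g(\theta_1)\sin^{n-2}\theta_2\cdots\sin\theta_{n-1}\,d\theta_2\wedge\cdots\wedge d\theta_n,$$ where, if $n=2m-1$, $$g(\theta_1)=-\frac{(2m-3)!!}{(2m-2)!!}\left(\pi-\theta_1+\sum_{k=1}^{m-1}\frac{(2k-2)!!}{(2k-1)!!}\cos\theta_1\sin^{2k-1}\theta_1\right),$$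 and, if $n=2m-2$, $$g(\theta_1)=-\frac{(2m-4)!!}{(2m-3)!!}\left(1+\sum_{k=1}^{m-1}\frac{(2k-3)!!}{(2k-2)!!}\cos\theta_1\sin^{2k-2}\theta_1\right).$$
   Context: Double factorials use the conventions $(-1)!!=0!!=1$. The polar coordinates are taken with $r>0$, $0<\theta_1,\dots,\theta_{n-1}<\pi$, and $\theta_n$ the angular variable of the $(x_{n-1},x_n)$-plane. *)

theory Defs
  imports "HOL-Analysis.Analysis"
begin

text \<open>Double factorial on naturals; dfact on integers with (-1)!! = 0!! = 1.\<close>
fun dfn :: "nat \<Rightarrow> real" where
  "dfn 0 = 1"
| "dfn (Suc 0) = 1"
| "dfn (Suc (Suc k)) = real (k + 2) * dfn k"

definition dfact :: "int \<Rightarrow> real" where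
  "dfact z = dfn (nat z)"

definition ldet :: "nat \<Rightarrow> (nat \<Rightarrow> nat \<Rightarrow> real) \<Rightarrow> real" where
  "ldet k M = (\<Sum>p\<in>{p. p permutes {..<k}}. of_int (sign p) * (\<Prod>i<k. M i (p i)))"

text \<open>dx_{c_1} wedge ... wedge dx_{c_k} evaluated on vectors v 0, ..., v (k-1),
  where cs = [c_1,...,c_k].\<close>
definition dxs :: "nat list \<Rightarrow> (nat \<Rightarrow> nat \<Rightarrow> real) \<Rightarrow> real" where
  "dxs cs v = ldet (length cs) (\<lambda>i l. v i (cs ! l))"

text \<open>Polar coordinates: y 0 = r, y k = theta_k (1 \<le> k \<le> n); result indexed 1..n+1.\<close>
definition polar :: "nat \<Rightarrow> (nat \<Rightarrow> real) \<Rightarrow> (nat \<Rightarrow> real)" where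
  "polar n y k =
     (if 1 \<le> k \<and> k \<le> n - 1 then y 0 * (\<Prod>i\<in>{1..k}. sin (y i)) * cos (y (k+1))
      else if k = n then y 0 * (\<Prod>i\<in>{1..n}. sin (y i))
      else if k = n + 1 then y 0 * cos (y 1)
      else 0)"

definition jac :: "nat \<Rightarrow> (nat \<Rightarrow> real) \<Rightarrow> nat \<Rightarrow> nat \<Rightarrow> real" where
  "jac n y j k = deriv (\<lambda>t. polar n (y(k := t)) j) (y k)"

definition pushv :: "nat \<Rightarrow> (nat \<Rightarrow> real) \<Rightarrow> (nat \<Rightarrow> real) \<Rightarrow> (nat \<Rightarrow> real)" where
  "pushv n y w = (\<lambda>j. \<Sum>k\<le>n. jac n y j k * w k)"

definition rad :: "nat \<Rightarrow> (nat \<Rightarrow> real) \<Rightarrow> real" where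
  "rad n x = sqrt (\<Sum>j=1..n+1. x j ^ 2)"

definition Hform :: "nat \<Rightarrow> (nat \<Rightarrow> real) \<Rightarrow> (nat \<Rightarrow> nat \<Rightarrow> real) \<Rightarrow> real" where
  "Hform n x v = (\<Sum>j=1..n+1. (-1) ^ (j - 1) * (x j / rad n x ^ (n+1))
                     * dxs (filter (\<lambda>i. i \<noteq> j) [1..<n+2]) v)"

definition fB :: "nat \<Rightarrow> real \<Rightarrow> real \<Rightarrow> real" where
  "fB n r z = integral {0..1} (\<lambda>t. 2 ^ n * t ^ (n - 1) / (r - z + t^2 * (r + z)) ^ n)"

definition Bform :: "nat \<Rightarrow> (nat \<Rightarrow> real) \<Rightarrow> (nat \<Rightarrow> nat \<Rightarrow> real) \<Rightarrow> real" where
  "Bform n x v = fB n (rad n x) (x (n+1)) *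
     (\<Sum>j=1..n. (-1) ^ (n + j) * x j * dxs (filter (\<lambda>i. i \<noteq> j) [1..<n+1]) v)"

definition gfun :: "nat \<Rightarrow> real \<Rightarrow> real" where
  "gfun n th =
    (if odd n then
       (let m = (n + 1) div 2 in
        - (dfact (2*int m - 3) / dfact (2*int m - 2)) *
          (pi - th + (\<Sum>k=1..m-1. dfact (2*int k - 2) / dfact (2*int k - 1)
                                   * cos th * sin th ^ (2*k - 1))))
     else
       (let m = (n + 2) div 2 in
        - (dfact (2*int m - 4) / dfact (2*int m - 3)) *
          (1 + (\<Sum>k=1..m-1. dfact (2*int k - 3) / dfact (2*int k - 2)
                                   * cos th * sin th ^ (2*k - 2)))))"

end

theory Submission
  imports Defs "Jordan_Normal_Form.Determinant"
begin

(* Write x = polar n y and v_i for the push-forward of w_i.  The alternating sums defining H and B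
   are Laplace expansions of determinants whose rows are the v_i and one row made of coordinates
   of x.  Since x = r dx/dr, that row is itself a push-forward (of r e_0), so each determinant
   factors into a determinant of the w_i times the Jacobian determinant of polar coordinates,
   which is (-1)^n r^n prod sin^(n-i) theta_i by expansion along the last column and induction
   on n.  For B only x_1, ..., x_n enter; they are polar coordinates of dimension n - 1 in
   (rho, theta_2, ..., theta_n) with rho = r sin theta_1, which produces the factor rho^n.
   Finally f(r, r cos theta) rho^n = -g(theta): g is the primitive of sin^(n-1) vanishing at pi,
   and the substitution theta' = pi - 2 arctan (t / tan (theta/2)) turns the integral defining f
   into g(pi) - g(theta). *)

section \<open>The function g and the integral f\<close>

lemma dfn_pos: "0 < dfn k"
  by (induction k rule: dfn.induct) auto

lemma dfn_odd: "dfn (2*M + 1) = real (2*M + 1) * dfn (2*M - 1)"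
  by (cases M) simp_all

lemma dfn_even: "1 \<le> M \<Longrightarrow> dfn (2*M) = real (2*M) * dfn (2*M - 2)"
  by (cases M) simp_all

lemma dfact_double:
  "dfact (2 * int k) = dfn (2*k)"
  "dfact (2 * int k - 1) = dfn (2*k - 1)"
  "dfact (2 * int k - numeral d) = dfn (2*k - numeral d)"
  unfolding dfact_def by (simp_all add: nat_diff_distrib' nat_mult_distrib)

lemma gfun_odd:
  "gfun (2*M+1) th = - (dfn (2*M-1) / dfn (2*M)) *
     (pi - th + (\<Sum>k=1..M. dfn (2*k-2) / dfn (2*k-1) * cos th * sin th ^ (2*k-1)))"
  unfolding gfun_def Let_def by (simp add: dfact_double)

lemma gfun_even:
  assumes "1 \<le> M"
  shows "gfun (2*M) th = - (dfn (2*M-2) / dfn (2*M-1)) *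
     (1 + (\<Sum>k=1..M. dfn (2*k-3) / dfn (2*k-2) * cos th * sin th ^ (2*k-2)))"
proof -
  have "(2*M + 2) div 2 = Suc M" by simp
  then show ?thesis
    using assms unfolding gfun_def Let_def by (simp add: dfact_double)
qed

lemma gfun_1: "gfun 1 th = th - pi"
  using gfun_odd[of 0 th] by simp

lemma gfun_2: "gfun 2 th = - (1 + cos th)"
  using gfun_even[of 1 th] by simp

(* The reduction formula: gfun n is the primitive of sin^(n-1) vanishing at pi. *)
lemma gfun_Suc_Suc:
  assumes "1 \<le> n"
  shows "gfun (Suc (Suc n)) th
    = real n / (real n + 1) * gfun n th - cos th * sin th ^ n / (real n + 1)"
proof -
  have reduce: "- (N*A / ((N+1)*B)) * (X + (S + B / (N*A) * c * s))
      = N / (N+1) * (- (A/B) * (X + S)) - c * s / (N+1)"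
    if "0 < A" "0 < B" "0 < N" for A B N X S c s :: real
    using that by (simp add: divide_simps) (simp add: algebra_simps)
  show ?thesis
  proof (cases "odd n")
    case True
    then obtain M where n: "n = 2*M + 1" by (metis oddE)
    define A where "A = dfn (2*M - 1)"
    define B where "B = dfn (2*M)"
    define S where "S = (\<Sum>k=1..M. dfn (2*k-2) / dfn (2*k-1) * cos th * sin th ^ (2*k-1))"
    have "gfun (Suc (Suc n)) th = gfun (2 * Suc M + 1) th" using n by simp
    also have "\<dots> = - (real n * A / ((real n + 1) * B)) *
        (pi - th + (S + B / (real n * A) * cos th * sin th ^ n))"
      unfolding gfun_odd S_def A_def B_def using dfn_odd[of M] n by simp
    also have "\<dots> = real n / (real n + 1) * (- (A/B) * (pi - th + S))
        - cos th * sin th ^ n / (real n + 1)"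
      by (rule reduce) (simp_all add: A_def B_def n dfn_pos)
    also have "\<dots> = real n / (real n + 1) * gfun n th - cos th * sin th ^ n / (real n + 1)"
      unfolding n gfun_odd A_def B_def S_def ..
    finally show ?thesis .
  next
    case False
    then obtain M where n: "n = 2*M" by (metis evenE)
    with assms have M: "1 \<le> M" by simp
    define A where "A = dfn (2*M - 2)"
    define B where "B = dfn (2*M - 1)"
    define S where "S = (\<Sum>k=1..M. dfn (2*k-3) / dfn (2*k-2) * cos th * sin th ^ (2*k-2))"
    have "gfun (Suc (Suc n)) th = gfun (2 * Suc M) th" using n by simp
    also have "\<dots> = - (real n * A / ((real n + 1) * B)) *
        (1 + (S + B / (real n * A) * cos th * sin th ^ n))"
      unfolding gfun_even[OF le_SucI[OF M]] S_def A_def B_def using dfn_even[OF M] dfn_odd[of M] n M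
      by (simp add: numeral_3_eq_3)
    also have "\<dots> = real n / (real n + 1) * (- (A/B) * (1 + S))
        - cos th * sin th ^ n / (real n + 1)"
      by (rule reduce) (use M in \<open>simp_all add: A_def B_def n dfn_pos\<close>)
    also have "\<dots> = real n / (real n + 1) * gfun n th - cos th * sin th ^ n / (real n + 1)"
      unfolding n gfun_even[OF M] A_def B_def S_def ..
    finally show ?thesis .
  qed
qed

lemma nat_induct2_at_least_one [consumes 1, case_names one two step]:
  assumes "1 \<le> n" "P 1" "P 2" "\<And>k. 1 \<le> k \<Longrightarrow> P k \<Longrightarrow> P (Suc (Suc k))"
  shows "P n"
proof -
  obtain k where k: "n = Suc k" using assms(1) by (cases n) auto
  have "P (Suc k)"
    by (induction k rule: nat_induct2) (use assms in \<open>simp_all add: numeral_2_eq_2\<close>)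
  then show ?thesis unfolding k .
qed

lemma has_real_derivative_gfun:
  assumes "1 \<le> n"
  shows "(gfun n has_real_derivative sin th ^ (n - 1)) (at th)"
  using assms
proof (induction n rule: nat_induct2_at_least_one)
  case one
  show ?case unfolding gfun_1[abs_def] by (auto intro!: derivative_eq_intros)
next
  case two
  show ?case unfolding gfun_2[abs_def] by (auto intro!: derivative_eq_intros)
next
  case (step k)
  obtain j where k: "k = Suc j" using step.hyps by (cases k) auto
  have pythagoras: "K * P - (K * (c * P) * c - s * (s * P)) = s * (s * P) * (K + 1)"
    if "s\<^sup>2 + c\<^sup>2 = 1" for K s c P :: real
  proof -
    have "K * (c * P) * c = K * P * (1 - s\<^sup>2)"
      using that by (simp add: power2_eq_square algebra_simps flip: that)
    then show ?thesis by (simp add: power2_eq_square algebra_simps)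
  qed
  have "((\<lambda>th. real k / (real k + 1) * gfun k th - cos th * sin th ^ k / (real k + 1))
      has_real_derivative real k / (real k + 1) * sin th ^ (k - 1)
        - (- sin th * sin th ^ k + real k * (cos th * sin th ^ (k - Suc 0)) * cos th) / (real k + 1))
      (at th)"
    by (intro DERIV_diff DERIV_cmult DERIV_cdivide DERIV_mult DERIV_cos DERIV_power DERIV_sin step.IH)
  moreover have "real k / (real k + 1) * sin th ^ (k - 1)
      - (- sin th * sin th ^ k + real k * (cos th * sin th ^ (k - Suc 0)) * cos th) / (real k + 1)
      = sin th ^ (Suc (Suc k) - 1)"
    using pythagoras unfolding k by (simp add: divide_simps)
  ultimately show ?case unfolding gfun_Suc_Suc[OF step.hyps, abs_def] by simp
qed

lemma gfun_pi: "1 \<le> n \<Longrightarrow> gfun n pi = 0"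
proof (induction n rule: nat_induct2_at_least_one)
  case (step k)
  then show ?case by (simp add: gfun_Suc_Suc)
qed (simp_all add: gfun_1 gfun_1[unfolded One_nat_def] gfun_2)

lemma fB_integrand_tan_half:
  fixes k r t :: real assumes k: "0 < k" and r: "0 < r"
  shows "(r * (2*k / (1 + k\<^sup>2))) ^ Suc m * (2 ^ Suc m * t ^ m /
      (r - r * ((1 - k\<^sup>2) / (1 + k\<^sup>2)) + t\<^sup>2 * (r + r * ((1 - k\<^sup>2) / (1 + k\<^sup>2)))) ^ Suc m)
    = (2*t*k / (k\<^sup>2 + t\<^sup>2)) ^ m * (2*k / (k\<^sup>2 + t\<^sup>2))"
proof -
  define Q where "Q = k\<^sup>2 + t\<^sup>2"
  define E where "E = 1 + k\<^sup>2"
  have "0 < Q" "0 < E" using k by (simp_all add: Q_def E_def add_pos_nonneg)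
  have den: "r - r * ((1 - k\<^sup>2) / E) + t\<^sup>2 * (r + r * ((1 - k\<^sup>2) / E)) = 2 * r * Q / E"
    using \<open>0 < E\<close> unfolding Q_def E_def by (simp add: divide_simps) (simp add: algebra_simps)
  have "(r * (2*k / E)) ^ Suc m *
        (2 ^ Suc m * t ^ m / (r - r * ((1 - k\<^sup>2) / E) + t\<^sup>2 * (r + r * ((1 - k\<^sup>2) / E))) ^ Suc m)
      = (r * (2*k / E) / (2 * r * Q / E)) ^ Suc m * (2 ^ Suc m * t ^ m)"
    unfolding den by (simp add: power_divide)
  also have "r * (2*k / E) / (2 * r * Q / E) = k / Q"
    using \<open>0 < E\<close> r by (simp add: field_simps)
  also have "(k / Q) ^ Suc m * (2 ^ Suc m * t ^ m) = (2*t*k / Q) ^ m * (2*k / Q)"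
    by (simp add: power_mult_distrib power_divide algebra_simps)
  finally show ?thesis unfolding Q_def E_def .
qed

lemma fB_polar:
  assumes n: "1 \<le> n" and r: "0 < r" and th: "0 < th" "th < pi"
  shows "fB n r (r * cos th) * (r * sin th) ^ n = - gfun n th"
proof -
  obtain m where nm: "n = Suc m" using n by (cases n) auto
  define k where "k = tan (th/2)"
  have k: "0 < k" unfolding k_def using th by (simp add: tan_gt_zero)
  have "cos (th/2) \<noteq> 0" using cos_gt_zero[of "th/2"] th by simp
  then have sin_th: "sin th = 2*k / (1 + k\<^sup>2)" and cos_th: "cos th = (1 - k\<^sup>2) / (1 + k\<^sup>2)"
    using sin_tan_half[of "th/2"] cos_tan_half[of "th/2"] unfolding k_def by simp_all
  define f where "f t = 2 ^ n * t ^ (n - 1) / (r - r * cos th + t\<^sup>2 * (r + r * cos th)) ^ n" for t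
  define F where "F t = - gfun n (pi - 2 * arctan (t / k))" for t
  have F': "(F has_real_derivative (r * sin th) ^ n * f t) (at t)" for t
  proof -
    have inner: "((\<lambda>t. pi - 2 * arctan (t / k)) has_real_derivative - (2*k / (k\<^sup>2 + t\<^sup>2))) (at t)"
      using k by (auto intro!: derivative_eq_intros simp: field_simps power2_eq_square)
    have "sin (2 * arctan (t / k)) = 2*t*k / (k\<^sup>2 + t\<^sup>2)"
      using sin_tan_half[of "arctan (t / k)"] k by (simp add: tan_arctan field_simps power2_eq_square)
    then have "(F has_real_derivative (2*t*k / (k\<^sup>2 + t\<^sup>2)) ^ m * (2*k / (k\<^sup>2 + t\<^sup>2))) (at t)"
      using DERIV_minus[OF DERIV_chain2[OF has_real_derivative_gfun[OF n] inner]]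
      unfolding F_def[abs_def] nm by simp
    moreover have "(r * sin th) ^ n * f t = (2*t*k / (k\<^sup>2 + t\<^sup>2)) ^ m * (2*k / (k\<^sup>2 + t\<^sup>2))"
      unfolding f_def sin_th cos_th nm diff_Suc_1 by (rule fB_integrand_tan_half[OF k r])
    ultimately show ?thesis by simp
  qed
  have "arctan (1 / k) = pi/2 - th/2"
    using arctan_inverse[of k] k th unfolding k_def by (simp add: arctan_tan inverse_eq_divide)
  then have F1: "F 1 = - gfun n th" by (simp add: F_def)
  have F0: "F 0 = 0" by (simp add: F_def gfun_pi[OF n])
  have "((\<lambda>t. (r * sin th) ^ n * f t) has_integral F 1 - F 0) {0..1}"
    by (rule fundamental_theorem_of_calculus)
       (auto simp: has_real_derivative_iff_has_vector_derivative[symmetric]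
          intro: has_field_derivative_at_within F')
  then have "integral {0..1} (\<lambda>t. (r * sin th) ^ n * f t) = F 1 - F 0"
    by (rule integral_unique)
  then show ?thesis
    unfolding fB_def f_def[symmetric] F0 F1 by (simp add: mult.commute)
qed

section \<open>Polar coordinates and their partial derivatives\<close>

lemma polar_eq_radius_mult: "polar n y j = y 0 * polar n (y(0 := 1)) j"
  unfolding polar_def by (auto intro!: prod.cong)

lemma polar_fun_upd_beyond: "1 \<le> n \<Longrightarrow> n < k \<Longrightarrow> polar n (y(k := t)) j = polar n y j"
  unfolding polar_def by (auto intro!: prod.cong)

lemma polar_Suc:
  assumes "1 \<le> m"
  shows "polar (Suc m) y j =
    (if j = m then polar m y m * cos (y (Suc m))
     else if j = Suc m then polar m y m * sin (y (Suc m))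
     else if j = m + 2 then polar m y (Suc m)
     else polar m y j)"
  using assms unfolding polar_def by auto

lemma sum_polar_squares: "1 \<le> n \<Longrightarrow> (\<Sum>j=1..n+1. polar n y j ^ 2) = y 0 ^ 2"
proof (induction n rule: nat_induct_at_least)
  case base
  show ?case
    using sin_cos_squared_add[of "y 1"] by (simp add: polar_def power_mult_distrib flip: distrib_left)
next
  case (Suc m)
  obtain k where k: "m = Suc k" using Suc.hyps by (cases m) auto
  have "(\<Sum>j=1..Suc m + 1. polar (Suc m) y j ^ 2)
      = (\<Sum>j=1..k. polar m y j ^ 2) + (polar m y m * cos (y (Suc m))) ^ 2
        + (polar m y m * sin (y (Suc m))) ^ 2 + polar m y (Suc m) ^ 2"
    using Suc.hyps unfolding k by (simp add: polar_Suc)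
  also have "\<dots> = (\<Sum>j=1..k. polar m y j ^ 2) + polar m y m ^ 2 + polar m y (Suc m) ^ 2"
    using sin_cos_squared_add[of "y (Suc m)"] by (simp add: power_mult_distrib flip: distrib_left)
  also have "\<dots> = (\<Sum>j=1..m+1. polar m y j ^ 2)"
    unfolding k by simp
  finally show ?case using Suc.IH by simp
qed

lemma rad_polar:
  assumes "1 \<le> n" "0 < y 0"
  shows "rad n (polar n y) = y 0"
  unfolding rad_def sum_polar_squares[OF assms(1)] using assms(2) by simp

(* polar_tail y = (rho, theta_2, ..., theta_n) with rho = r sin theta_1.  In these coordinates
   x_2, ..., x_n, x_1 are the polar coordinates x'_1, ..., x'_n of dimension n - 1, whence tail_index. *)
definition polar_tail :: "(nat \<Rightarrow> real) \<Rightarrow> nat \<Rightarrow> real" where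
  "polar_tail y i = (if i = 0 then y 0 * sin (y 1) else y (Suc i))"

definition tail_index :: "nat \<Rightarrow> nat \<Rightarrow> nat" where
  "tail_index m j = (if j = 1 then Suc m else j - 1)"

lemma polar_eq_polar_tail:
  assumes "1 \<le> m" "1 \<le> j" "j \<le> Suc m"
  shows "polar (Suc m) y j = polar m (polar_tail y) (tail_index m j)"
proof (cases "j = 1")
  case True
  then show ?thesis using assms unfolding polar_def polar_tail_def tail_index_def by auto
next
  case False
  with assms(2) obtain p where j: "j = Suc (Suc p)"
    by (metis One_nat_def Suc_le_D le_SucE not0_implies_Suc)
  have shift: "(\<Prod>i\<in>{1..Suc q}. f i) = f 1 * (\<Prod>i\<in>{1..q}. f (Suc i))" for q and f :: "nat \<Rightarrow> real"
    by (simp add: prod.atLeast_Suc_atMost prod.atLeast_Suc_atMost_Suc_shift del: prod.cl_ivl_Suc)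
  show ?thesis using assms unfolding polar_def polar_tail_def tail_index_def j
    by (auto simp del: prod.cl_ivl_Suc simp add: shift[unfolded One_nat_def] mult.assoc)
qed

lemma polar_tail_fun_upd_Suc: "1 \<le> b \<Longrightarrow> polar_tail (y(Suc b := t)) = (polar_tail y)(b := t)"
  unfolding polar_tail_def by (rule ext) auto

lemma polar_tail_fun_upd_radial:
  "b \<le> 1 \<Longrightarrow> (polar_tail (y(b := t)))(0 := 1) = (polar_tail y)(0 := 1)"
  unfolding polar_tail_def by (rule ext) auto

lemma field_differentiable_fun_upd: "(\<lambda>t. (y(k := t)) i) field_differentiable at x"
  by (cases "i = k") (simp_all add: fun_upd_def)

lemma field_differentiable_sin:
  "f field_differentiable at x \<Longrightarrow> (\<lambda>t. sin (f t)) field_differentiable at x"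
  unfolding field_differentiable_def by (auto intro: DERIV_chain2[OF DERIV_sin])

lemma field_differentiable_cos:
  "f field_differentiable at x \<Longrightarrow> (\<lambda>t. cos (f t)) field_differentiable at x"
  unfolding field_differentiable_def by (auto intro: DERIV_chain2[OF DERIV_cos])

lemma field_differentiable_prod:
  assumes "\<And>i. i \<in> A \<Longrightarrow> f i field_differentiable at x"
  shows "(\<lambda>t. \<Prod>i\<in>A. f i t) field_differentiable at x"
proof -
  obtain D where "\<And>i. i \<in> A \<Longrightarrow> (f i has_field_derivative D i) (at x)"
    using assms unfolding field_differentiable_def by metis
  then show ?thesis
    unfolding field_differentiable_def by (blast intro: has_field_derivative_prod)
qed

lemma polar_field_differentiable: "(\<lambda>t. polar n (y(k := t)) j) field_differentiable at x"
proof -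
  have "(\<lambda>t. polar n (y(k := t)) j) =
     (if 1 \<le> j \<and> j \<le> n - 1
      then (\<lambda>t. (y(k := t)) 0 * (\<Prod>i\<in>{1..j}. sin ((y(k := t)) i)) * cos ((y(k := t)) (j+1)))
      else if j = n then (\<lambda>t. (y(k := t)) 0 * (\<Prod>i\<in>{1..n}. sin ((y(k := t)) i)))
      else if j = n + 1 then (\<lambda>t. (y(k := t)) 0 * cos ((y(k := t)) 1))
      else (\<lambda>t. 0))"
    unfolding polar_def by auto
  then show ?thesis
    by (simp only: split: if_split)
       (intro conjI impI field_differentiable_mult field_differentiable_prod field_differentiable_sin
          field_differentiable_cos field_differentiable_fun_upd field_differentiable_const)
qed

lemma jac_radial: "jac n y j 0 = polar n (y(0 := 1)) j"
proof -
  have "(\<lambda>t. polar n (y(0 := t)) j) = (\<lambda>t. t * polar n (y(0 := 1)) j)"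
    by (subst polar_eq_radius_mult) simp
  then show ?thesis
    unfolding jac_def by (auto intro!: DERIV_imp_deriv derivative_eq_intros)
qed

lemma polar_eq_radius_mult_jac: "polar n y j = y 0 * jac n y j 0"
  unfolding jac_radial by (rule polar_eq_radius_mult)

lemma jac_Suc:
  assumes "1 \<le> m" "b \<le> m"
  shows "jac (Suc m) y j b =
    (if j = m then jac m y m b * cos (y (Suc m))
     else if j = Suc m then jac m y m b * sin (y (Suc m))
     else if j = m + 2 then jac m y (Suc m) b
     else jac m y j b)"
proof -
  have "polar (Suc m) (y(b := t)) j =
    (if j = m then polar m (y(b := t)) m * cos (y (Suc m))
     else if j = Suc m then polar m (y(b := t)) m * sin (y (Suc m))
     else if j = m + 2 then polar m (y(b := t)) (Suc m)
     else polar m (y(b := t)) j)" for t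
    using polar_Suc[OF assms(1), of "y(b := t)"] assms(2) by simp
  then show ?thesis
    unfolding jac_def by (simp add: deriv_cmult_right polar_field_differentiable)
qed

lemma jac_Suc_last:
  assumes "1 \<le> m"
  shows "jac (Suc m) y j (Suc m) =
    (if j = m then - polar m y m * sin (y (Suc m))
     else if j = Suc m then polar m y m * cos (y (Suc m))
     else 0)"
proof -
  have "polar (Suc m) (y(Suc m := t)) j =
    (if j = m then polar m y m * cos t
     else if j = Suc m then polar m y m * sin t
     else if j = m + 2 then polar m y (Suc m)
     else polar m y j)" for t
    using polar_Suc[OF assms, of "y(Suc m := t)"] assms by (simp add: polar_fun_upd_beyond)
  then show ?thesis
    unfolding jac_def by (auto intro!: DERIV_imp_deriv derivative_eq_intros)
qed

lemma polar_eq_polar_tail_jac_radial: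
  assumes "1 \<le> m" "1 \<le> j" "j \<le> Suc m"
  shows "polar (Suc m) y j = y 0 * sin (y 1) * jac m (polar_tail y) (tail_index m j) 0"
  unfolding polar_eq_polar_tail[OF assms] polar_eq_radius_mult_jac[of _ "polar_tail y"]
  by (simp add: polar_tail_def)

lemma jac_tail:
  assumes "1 \<le> m" "1 \<le> j" "j \<le> Suc m" "1 \<le> b"
  shows "jac (Suc m) y j (Suc b) = jac m (polar_tail y) (tail_index m j) b"
  using assms unfolding jac_def
  by (simp add: polar_eq_polar_tail polar_tail_fun_upd_Suc) (simp add: polar_tail_def)

lemma jac_tail_radial:
  assumes "1 \<le> m" "1 \<le> j" "j \<le> Suc m"
  shows "jac (Suc m) y j 0 = sin (y 1) * jac m (polar_tail y) (tail_index m j) 0"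
  unfolding jac_radial polar_eq_polar_tail[OF assms]
    polar_eq_radius_mult[of _ "polar_tail (y(0 := 1))"]
  by (simp add: polar_tail_fun_upd_radial) (simp add: polar_tail_def)

lemma jac_tail_first_angle:
  assumes "1 \<le> m" "1 \<le> j" "j \<le> Suc m"
  shows "jac (Suc m) y j 1 = y 0 * cos (y 1) * jac m (polar_tail y) (tail_index m j) 0"
proof -
  have "polar (Suc m) (y(1 := t)) j = y 0 * jac m (polar_tail y) (tail_index m j) 0 * sin t" for t
    unfolding polar_eq_polar_tail[OF assms] polar_eq_radius_mult[of _ "polar_tail (y(1 := t))"]
    by (simp add: polar_tail_fun_upd_radial jac_radial) (simp add: polar_tail_def)
  then show ?thesis
    unfolding jac_def by (auto intro!: DERIV_imp_deriv derivative_eq_intros)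
qed

lemma pushv_polar_tail:
  assumes "1 \<le> m" "1 \<le> j" "j \<le> Suc m"
  shows "pushv (Suc m) y w j =
    pushv m (polar_tail y) (\<lambda>h. if h = 0 then sin (y 1) * w 0 + y 0 * cos (y 1) * w 1 else w (Suc h))
      (tail_index m j)"
proof -
  obtain k where k: "m = Suc k" using assms(1) by (cases m) auto
  have "pushv (Suc m) y w j = jac (Suc m) y j 0 * w 0 + (jac (Suc m) y j 1 * w 1
      + (\<Sum>h\<le>k. jac (Suc m) y j (Suc (Suc h)) * w (Suc (Suc h))))"
    unfolding pushv_def k by (simp only: sum.atMost_Suc_shift One_nat_def)
  also have "\<dots> = pushv m (polar_tail y)
      (\<lambda>h. if h = 0 then sin (y 1) * w 0 + y 0 * cos (y 1) * w 1 else w (Suc h)) (tail_index m j)"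
    unfolding pushv_def k sum.atMost_Suc_shift
    using assms jac_tail_radial[OF assms] jac_tail_first_angle[OF assms] jac_tail[OF assms]
    by (simp add: k algebra_simps)
  finally show ?thesis .
qed

section \<open>Determinants\<close>

lemma det_two:
  assumes "A \<in> carrier_mat 2 2"
  shows "det A = A $$ (0,0) * A $$ (1,1) - A $$ (0,1) * A $$ (1,0)"
proof -
  have "det A = (\<Sum>j<2. A $$ (0,j) * cofactor A 0 j)"
    by (rule laplace_expansion_row[OF assms]) simp
  also have "\<dots> = A $$ (0,0) * cofactor A 0 0 + A $$ (0,1) * cofactor A 0 1"
    by (simp add: numeral_2_eq_2)
  also have "cofactor A 0 0 = A $$ (1,1)"
    unfolding cofactor_def using assms by (subst det_single) (auto simp: mat_delete_def)
  also have "cofactor A 0 1 = - A $$ (1,0)"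
    unfolding cofactor_def using assms by (subst det_single) (auto simp: mat_delete_def)
  finally show ?thesis by simp
qed

lemma ldet_eq_det: "ldet k F = det (mat k k (\<lambda>(i,j). F i j))"
proof -
  have "det (mat k k (\<lambda>(i,j). F i j)) =
      (\<Sum>p\<in>{p. p permutes {0..<k}}. signof p * (\<Prod>i=0..<k. mat k k (\<lambda>(i,j). F i j) $$ (i, p i)))"
    by (rule det_def') simp
  also have "\<dots> = ldet k F"
    unfolding ldet_def atLeast0LessThan
  proof (rule sum.cong[OF refl])
    fix p assume "p \<in> {p. p permutes {..<k}}"
    then have "p i < k" if "i < k" for i
      using permutes_in_image[of p "{..<k}" i] that by simp
    then show "signof p * (\<Prod>i<k. mat k k (\<lambda>(i,j). F i j) $$ (i, p i))
        = of_int (sign p) * (\<Prod>i<k. F i (p i))"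
      by simp
  qed
  finally show ?thesis ..
qed

lemma dxs_eq_det: "dxs cs v = det (mat (length cs) (length cs) (\<lambda>(i,l). v i (cs ! l)))"
  unfolding dxs_def ldet_eq_det ..

lemma dxs_upt: "dxs [a..<b] w = det (mat (b - a) (b - a) (\<lambda>(i,l). w i (a + l)))"
  unfolding dxs_eq_det by (intro arg_cong[where f = det] eq_matI) auto

lemma filter_upt_neq:
  "a \<le> j \<Longrightarrow> j < b \<Longrightarrow> filter (\<lambda>i. i \<noteq> j) [a..<b] = [a..<j] @ [Suc j..<b]"
proof -
  assume "a \<le> j" "j < b"
  then have "[a..<b] = [a..<j] @ j # [Suc j..<b]"
    by (metis le_add_diff_inverse less_imp_le_nat upt_add_eq_append upt_conv_Cons)
  then show ?thesis by simp
qed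

lemma dxs_omit:
  assumes "1 \<le> j" "j < b"
  shows "dxs (filter (\<lambda>i. i \<noteq> j) [1..<b]) v
    = det (mat (b - 2) (b - 2) (\<lambda>(i,l). v i (if l < j - 1 then Suc l else l + 2)))"
  unfolding dxs_eq_det filter_upt_neq[OF assms]
  using assms by (intro arg_cong[where f = det] eq_matI) (auto simp: nth_append)

lemma alternating_sum_dxs_omit:
  assumes "k \<le> N"
  shows "(\<Sum>l<Suc N. (-1) ^ (k + l) * a l * dxs (filter (\<lambda>i. i \<noteq> Suc l) [1..<N+2]) v) =
    det (mat (Suc N) (Suc N) (\<lambda>(i,l). if i = k then a l else v (if i < k then i else i - 1) (Suc l)))"
    (is "_ = det ?M")
proof -
  have "det ?M = (\<Sum>l<Suc N. ?M $$ (k,l) * cofactor ?M k l)"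
    by (rule laplace_expansion_row) (use assms in auto)
  also have "\<dots> = (\<Sum>l<Suc N. (-1) ^ (k + l) * a l * dxs (filter (\<lambda>i. i \<noteq> Suc l) [1..<N+2]) v)"
  proof (rule sum.cong[OF refl])
    fix l assume "l \<in> {..<Suc N}"
    then have dxs: "dxs (filter (\<lambda>i. i \<noteq> Suc l) [1..<N+2]) v
        = det (mat N N (\<lambda>(i,l'). v i (if l' < l then Suc l' else l' + 2)))"
      using dxs_omit[of "Suc l" "N+2" v] by simp
    have "mat_delete ?M k l = mat N N (\<lambda>(i,l'). v i (if l' < l then Suc l' else l' + 2))"
      by (rule eq_matI) (auto simp: mat_delete_def)
    then show "?M $$ (k,l) * cofactor ?M k l
        = (-1) ^ (k + l) * a l * dxs (filter (\<lambda>i. i \<noteq> Suc l) [1..<N+2]) v"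
      using \<open>l \<in> {..<Suc N}\<close> assms unfolding cofactor_def dxs by simp
  qed
  finally show ?thesis ..
qed

lemma det_rows_pushforward:
  assumes F: "F \<in> carrier_mat (Suc N) (Suc N)" and k: "k \<le> N"
  shows "det (mat (Suc N) (Suc N) (\<lambda>(i,l). if i = k then c * F $$ (l,0)
            else (\<Sum>h<Suc N. F $$ (l,h) * w (if i < k then i else i - 1) h)))
    = (-1) ^ k * c * det (mat N N (\<lambda>(i,h). w i (Suc h))) * det F"
    (is "det ?M = _")
proof -
  define A where "A = mat (Suc N) (Suc N)
    (\<lambda>(i,h). if i = k then (if h = 0 then c else 0) else w (if i < k then i else i - 1) h)"
  have A: "A \<in> carrier_mat (Suc N) (Suc N)" by (simp add: A_def)
  have "?M = A * F\<^sup>T"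
  proof (rule eq_matI)
    fix i l assume "i < dim_row (A * F\<^sup>T)" "l < dim_col (A * F\<^sup>T)"
    then have il: "i < Suc N" "l < Suc N" using F by (auto simp: A_def)
    have "(A * F\<^sup>T) $$ (i,l) = (\<Sum>h<Suc N. A $$ (i,h) * F $$ (l,h))"
      using il F by (simp add: A_def scalar_prod_def atLeast0LessThan)
    also have "\<dots> = ?M $$ (i,l)"
      using il by (cases "i = k")
        (simp_all add: A_def sum.lessThan_Suc_shift mult.commute del: sum.lessThan_Suc)
    finally show "?M $$ (i,l) = (A * F\<^sup>T) $$ (i,l)" ..
  qed (use F in \<open>simp_all add: A_def\<close>)
  then have "det ?M = det A * det F"
    using A F by (simp add: det_mult[OF A] det_transpose)
  also have "det A = (\<Sum>h<Suc N. A $$ (k,h) * cofactor A k h)"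
    by (rule laplace_expansion_row[OF A]) (use k in simp)
  also have "\<dots> = c * cofactor A k 0"
    using k by (simp add: A_def sum.lessThan_Suc_shift del: sum.lessThan_Suc)
  also have "mat_delete A k 0 = mat N N (\<lambda>(i,h). w i (Suc h))"
    by (rule eq_matI) (auto simp: A_def mat_delete_def)
  then have "cofactor A k 0 = (-1) ^ k * det (mat N N (\<lambda>(i,h). w i (Suc h)))"
    by (simp add: cofactor_def)
  finally show ?thesis by simp
qed

section \<open>The Jacobian determinant of polar coordinates\<close>

definition polar_jacobian :: "nat \<Rightarrow> (nat \<Rightarrow> real) \<Rightarrow> real mat" where
  "polar_jacobian n y = mat (Suc n) (Suc n) (\<lambda>(j,k). jac n y (Suc j) k)"

lemma polar_jacobian_carrier [simp]: "polar_jacobian n y \<in> carrier_mat (Suc n) (Suc n)"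
  unfolding polar_jacobian_def by simp

lemma det_polar_jacobian_1: "det (polar_jacobian 1 y) = - y 0"
proof -
  have "jac 1 y 1 1 = y 0 * cos (y 1)" "jac 1 y 2 1 = - y 0 * sin (y 1)"
    unfolding jac_def polar_def by (auto intro!: DERIV_imp_deriv derivative_eq_intros)
  moreover have "jac 1 y 1 0 = sin (y 1)" "jac 1 y 2 0 = cos (y 1)"
    unfolding jac_radial polar_def by simp_all
  ultimately have "det (polar_jacobian 1 y)
      = sin (y 1) * (- y 0 * sin (y 1)) - y 0 * cos (y 1) * cos (y 1)"
    using det_two[of "polar_jacobian 1 y"] by (simp add: polar_jacobian_def numeral_2_eq_2)
  also have "\<dots> = - y 0 * (sin (y 1) ^ 2 + cos (y 1) ^ 2)"
    by (simp add: power2_eq_square algebra_simps del: sin_cos_squared_add3)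
  finally show ?thesis by simp
qed

lemma polar_jacobian_Suc_delete:
  assumes "1 \<le> m"
  shows "mat_delete (polar_jacobian (Suc m) y) (m - 1) (Suc m)
      = multrow (m - 1) (sin (y (Suc m))) (polar_jacobian m y)"
    and "mat_delete (polar_jacobian (Suc m) y) m (Suc m)
      = multrow (m - 1) (cos (y (Suc m))) (polar_jacobian m y)"
proof -
  let ?J = "polar_jacobian (Suc m) y" and ?K = "polar_jacobian m y"
  have rows: "jac (Suc m) y (Suc i) b = jac m y (Suc i) b" if "i < m - 1" "b \<le> m" for i b
    using that assms by (auto simp: jac_Suc)
  have last_rows: "jac (Suc m) y m b = cos (y (Suc m)) * jac m y m b"
    "jac (Suc m) y (Suc m) b = sin (y (Suc m)) * jac m y m b"
    "jac (Suc m) y (Suc (Suc m)) b = jac m y (Suc m) b"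
    if "b \<le> m" for b
    using that assms by (auto simp: jac_Suc)
  have "mat_delete ?J d (Suc m) = multrow (m - 1) a ?K"
    if "d = m - 1 \<and> a = sin (y (Suc m)) \<or> d = m \<and> a = cos (y (Suc m))" for d a
  proof (rule eq_matI)
    fix i b assume "i < dim_row (multrow (m - 1) a ?K)" "b < dim_col (multrow (m - 1) a ?K)"
    then have "i < Suc m" "b \<le> m" by (simp_all add: polar_jacobian_def mat_multrow_def)
    then consider "i < m - 1" | "i = m - 1" | "i = m" by linarith
    then show "mat_delete ?J d (Suc m) $$ (i, b) = multrow (m - 1) a ?K $$ (i, b)"
      using \<open>b \<le> m\<close> \<open>i < Suc m\<close> assms that
      by cases (auto simp: mat_delete_def polar_jacobian_def mat_multrow_def rows last_rows)
  qed (simp_all add: mat_delete_def polar_jacobian_def mat_multrow_def)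
  then show "mat_delete ?J (m - 1) (Suc m) = multrow (m - 1) (sin (y (Suc m))) ?K"
    and "mat_delete ?J m (Suc m) = multrow (m - 1) (cos (y (Suc m))) ?K"
    by simp_all
qed

lemma det_polar_jacobian_Suc:
  assumes "1 \<le> m"
  shows "det (polar_jacobian (Suc m) y) = - polar m y m * det (polar_jacobian m y)"
proof -
  let ?J = "polar_jacobian (Suc m) y" and ?s = "sin (y (Suc m))" and ?c = "cos (y (Suc m))"
  have "det ?J = (\<Sum>i<Suc (Suc m). ?J $$ (i, Suc m) * cofactor ?J i (Suc m))"
    by (rule laplace_expansion_column) auto
  also have "\<dots> = (\<Sum>i\<in>{m - 1, m}. ?J $$ (i, Suc m) * cofactor ?J i (Suc m))"
    using assms by (intro sum.mono_neutral_right) (auto simp: polar_jacobian_def jac_Suc_last)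
  also have "\<dots> = - polar m y m * ?s * cofactor ?J (m - 1) (Suc m)
      + polar m y m * ?c * cofactor ?J m (Suc m)"
    using assms by (simp add: polar_jacobian_def jac_Suc_last)
  also have "cofactor ?J (m - 1) (Suc m) = ?s * det (polar_jacobian m y)"
    using assms unfolding cofactor_def polar_jacobian_Suc_delete[OF assms]
    by (simp add: det_multrow[of _ "Suc m"])
  also have "cofactor ?J m (Suc m) = - (?c * det (polar_jacobian m y))"
    using assms unfolding cofactor_def polar_jacobian_Suc_delete[OF assms]
    by (simp add: det_multrow[of _ "Suc m"])
  also have "- polar m y m * ?s * (?s * det (polar_jacobian m y))
        + polar m y m * ?c * - (?c * det (polar_jacobian m y))
      = - polar m y m * det (polar_jacobian m y) * (?s ^ 2 + ?c ^ 2)"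
    by (simp add: power2_eq_square algebra_simps del: sin_cos_squared_add3)
  finally show ?thesis by simp
qed

lemma prod_staircase:
  fixes f :: "nat \<Rightarrow> 'a::comm_monoid_mult"
  shows "(\<Prod>i=1..m. f i ^ (Suc m - i)) = (\<Prod>i=1..m. f i) * (\<Prod>i=1..m-1. f i ^ (m - i))"
proof -
  have "(\<Prod>i=1..m. f i ^ (Suc m - i)) = (\<Prod>i=1..m. f i * f i ^ (m - i))"
    by (rule prod.cong) (auto simp: Suc_diff_le)
  also have "\<dots> = (\<Prod>i=1..m. f i) * (\<Prod>i=1..m. f i ^ (m - i))"
    by (rule prod.distrib)
  also have "(\<Prod>i=1..m. f i ^ (m - i)) = (\<Prod>i=1..m-1. f i ^ (m - i))"
    by (cases m) simp_all
  finally show ?thesis .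
qed

lemma det_polar_jacobian:
  "1 \<le> n \<Longrightarrow> det (polar_jacobian n y) = (-1) ^ n * y 0 ^ n * (\<Prod>i=1..n-1. sin (y i) ^ (n - i))"
proof (induction n rule: nat_induct_at_least)
  case base
  then show ?case using det_polar_jacobian_1 by simp
next
  case (Suc m)
  have "polar m y m = y 0 * (\<Prod>i=1..m. sin (y i))"
    using Suc.hyps unfolding polar_def by simp
  then show ?case
    using prod_staircase[of "\<lambda>i. sin (y i)" m] unfolding det_polar_jacobian_Suc[OF Suc.hyps] Suc.IH
    by simp
qed

lemma prod_polar_tail_sin:
  "(\<Prod>i=1..m-1. sin (polar_tail y i) ^ (m - i)) = (\<Prod>i=2..m. sin (y i) ^ (Suc m - i))"
proof -
  have "(\<Prod>i=1..m-1. sin (polar_tail y i) ^ (m - i))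
      = (\<Prod>i=1..m-1. sin (y (Suc i)) ^ (Suc m - Suc i))"
    by (rule prod.cong) (auto simp: polar_tail_def)
  also have "\<dots> = (\<Prod>i=Suc 1..Suc (m-1). sin (y i) ^ (Suc m - i))"
    by (rule prod.shift_bounds_cl_Suc_ivl[symmetric])
  also have "{Suc 1..Suc (m-1)} = {2..m}"
    by auto
  finally show ?thesis .
qed

lemma det_polar_jacobian_tail_rotated:
  assumes "1 \<le> m"
  shows "det (mat (Suc m) (Suc m) (\<lambda>(l,h). jac m (polar_tail y) (tail_index m (Suc l)) h))
    = (y 0 * sin (y 1)) ^ m * (\<Prod>i=2..m. sin (y i) ^ (Suc m - i))"
proof -
  have rotate: "mat (Suc m) (Suc m) (\<lambda>(l,h). jac m (polar_tail y) (tail_index m (Suc l)) h)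
      = swap_row_to_front (polar_jacobian m (polar_tail y)) m"
    unfolding swap_row_to_front_result[OF polar_jacobian_carrier lessI]
    by (rule eq_matI) (auto simp: polar_jacobian_def tail_index_def)
  show ?thesis
    unfolding rotate swap_row_to_front_det[OF polar_jacobian_carrier lessI]
      det_polar_jacobian[OF assms] prod_polar_tail_sin
    by (simp add: polar_tail_def)
qed

section \<open>The forms H and B in polar coordinates\<close>

lemma Hform_polar:
  assumes n: "1 \<le> n" and r: "0 < y 0"
  shows "Hform n (polar n y) (\<lambda>i. pushv n y (w i))
    = (-1) ^ n * (\<Prod>i=1..n-1. sin (y i) ^ (n - i)) * dxs [1..<n+1] w"
proof -
  let ?x = "polar n y" and ?v = "\<lambda>i. pushv n y (w i)" and ?J = "polar_jacobian n y"
  let ?row = "\<lambda>i. if i < 0 then i else i - 1"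
  have "Hform n ?x ?v = (\<Sum>l<Suc n. (-1) ^ (0 + l) * ?x (Suc l)
      * dxs (filter (\<lambda>i. i \<noteq> Suc l) [1..<n+2]) ?v) / y 0 ^ (n+1)"
    unfolding Hform_def rad_polar[of n y, OF n r] sum.atLeast1_atMost_eq[folded One_nat_def]
      sum_divide_distrib
    by (simp add: algebra_simps)
  also have "(\<Sum>l<Suc n. (-1) ^ (0 + l) * ?x (Suc l) * dxs (filter (\<lambda>i. i \<noteq> Suc l) [1..<n+2]) ?v)
      = det (mat (Suc n) (Suc n) (\<lambda>(i,l). if i = 0 then ?x (Suc l) else ?v (?row i) (Suc l)))"
    by (rule alternating_sum_dxs_omit) simp
  also have "mat (Suc n) (Suc n) (\<lambda>(i,l). if i = 0 then ?x (Suc l) else ?v (?row i) (Suc l))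
      = mat (Suc n) (Suc n) (\<lambda>(i,l). if i = 0 then y 0 * ?J $$ (l,0)
          else (\<Sum>h<Suc n. ?J $$ (l,h) * w (?row i) h))"
    by (rule eq_matI)
      (auto simp: polar_jacobian_def pushv_def lessThan_Suc_atMost polar_eq_radius_mult_jac[of n y])
  also have "det \<dots> = (-1) ^ 0 * y 0 * det (mat n n (\<lambda>(i,h). w i (Suc h))) * det ?J"
    by (rule det_rows_pushforward) simp_all
  also have "det (mat n n (\<lambda>(i,h). w i (Suc h))) = dxs [1..<n+1] w"
    unfolding dxs_upt by simp
  finally show ?thesis
    using r by (simp add: det_polar_jacobian[OF n] field_simps)
qed

lemma Bform_sum_polar:
  assumes m: "1 \<le> m"
  shows "(\<Sum>j=1..Suc m. (-1) ^ (Suc m + j) * polar (Suc m) y j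
      * dxs (filter (\<lambda>i. i \<noteq> j) [1..<Suc m + 1]) (\<lambda>i. pushv (Suc m) y (w i)))
    = (-1) ^ m * (y 0 * sin (y 1)) ^ Suc m * (\<Prod>i=2..m. sin (y i) ^ (Suc m - i)) * dxs [2..<m+2] w"
proof -
  let ?x = "polar (Suc m) y" and ?v = "\<lambda>i. pushv (Suc m) y (w i)" and ?\<rho> = "y 0 * sin (y 1)"
  let ?row = "\<lambda>i. if i < m then i else i - 1"
  define F where "F = mat (Suc m) (Suc m) (\<lambda>(l,h). jac m (polar_tail y) (tail_index m (Suc l)) h)"
  define w' where
    "w' i h = (if h = 0 then sin (y 1) * w i 0 + y 0 * cos (y 1) * w i 1 else w i (Suc h))" for i h
  have "(\<Sum>j=1..Suc m. (-1) ^ (Suc m + j) * ?x j * dxs (filter (\<lambda>i. i \<noteq> j) [1..<Suc m + 1]) ?v)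
      = (\<Sum>l<Suc m. (-1) ^ (m + l) * ?x (Suc l) * dxs (filter (\<lambda>i. i \<noteq> Suc l) [1..<m+2]) ?v)"
    unfolding sum.atLeast1_atMost_eq[folded One_nat_def] by simp
  also have "\<dots> = det (mat (Suc m) (Suc m) (\<lambda>(i,l). if i = m then ?x (Suc l) else ?v (?row i) (Suc l)))"
    by (rule alternating_sum_dxs_omit) simp
  also have "mat (Suc m) (Suc m) (\<lambda>(i,l). if i = m then ?x (Suc l) else ?v (?row i) (Suc l))
      = mat (Suc m) (Suc m) (\<lambda>(i,l). if i = m then ?\<rho> * F $$ (l,0)
          else (\<Sum>h<Suc m. F $$ (l,h) * w' (?row i) h))"
  proof -
    have "?v i (Suc l) = pushv m (polar_tail y) (w' i) (tail_index m (Suc l))" if "l < Suc m" for i l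
      unfolding w'_def[abs_def] using m that by (intro pushv_polar_tail) auto
    then have "?v i (Suc l) = (\<Sum>h<Suc m. F $$ (l,h) * w' i h)" if "l < Suc m" for i l
      using that by (simp add: pushv_def F_def lessThan_Suc_atMost)
    moreover have "?x (Suc l) = ?\<rho> * F $$ (l,0)" if "l < Suc m" for l
      using m that unfolding F_def by (simp add: polar_eq_polar_tail_jac_radial)
    ultimately show ?thesis by (intro eq_matI) auto
  qed
  also have "det \<dots> = (-1) ^ m * ?\<rho> * det (mat m m (\<lambda>(i,h). w' i (Suc h))) * det F"
    by (rule det_rows_pushforward) (simp_all add: F_def)
  also have "det (mat m m (\<lambda>(i,h). w' i (Suc h))) = dxs [2..<m+2] w"
    unfolding dxs_upt w'_def by simp
  also have "det F = ?\<rho> ^ m * (\<Prod>i=2..m. sin (y i) ^ (Suc m - i))"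
    unfolding F_def by (rule det_polar_jacobian_tail_rotated[OF m])
  finally show ?thesis by (simp add: algebra_simps)
qed

lemma Bform_polar:
  assumes n: "2 \<le> n" and r: "0 < y 0" and th: "0 < y 1" "y 1 < pi"
  shows "Bform n (polar n y) (\<lambda>i. pushv n y (w i))
    = (-1) ^ n * gfun n (y 1) * (\<Prod>i=2..n-1. sin (y i) ^ (n - i)) * dxs [2..<n+1] w"
proof -
  obtain m where nm: "n = Suc m" and m: "1 \<le> m" using n by (cases n) auto
  have "rad n (polar n y) = y 0" "polar n y (n+1) = y 0 * cos (y 1)"
    using n r by (auto simp: rad_polar polar_def)
  then have "Bform n (polar n y) (\<lambda>i. pushv n y (w i)) = (-1) ^ m
      * (fB n (y 0) (y 0 * cos (y 1)) * (y 0 * sin (y 1)) ^ n)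
      * (\<Prod>i=2..n-1. sin (y i) ^ (n - i)) * dxs [2..<n+1] w"
    unfolding Bform_def nm Bform_sum_polar[OF m] by simp
  also have "fB n (y 0) (y 0 * cos (y 1)) * (y 0 * sin (y 1)) ^ n = - gfun n (y 1)"
    using fB_polar[of n "y 0" "y 1"] n r th by simp
  finally show ?thesis unfolding nm by simp
qed

theorem mainTheorem3:
  fixes n :: nat and y :: "nat \<Rightarrow> real" and w :: "nat \<Rightarrow> nat \<Rightarrow> real"
  assumes "n \<ge> 2" and "y 0 > 0" and "\<forall>i\<in>{1..n-1}. 0 < y i \<and> y i < pi"
  shows "Hform n (polar n y) (\<lambda>i. pushv n y (w i))
           = (-1) ^ n * (\<Prod>i=1..n-1. sin (y i) ^ (n - i)) * dxs [1..<n+1] w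
       \<and> Bform n (polar n y) (\<lambda>i. pushv n y (w i))
           = (-1) ^ n * gfun n (y 1) * (\<Prod>i=2..n-1. sin (y i) ^ (n - i)) * dxs [2..<n+1] w"
proof
  show "Hform n (polar n y) (\<lambda>i. pushv n y (w i))
      = (-1) ^ n * (\<Prod>i=1..n-1. sin (y i) ^ (n - i)) * dxs [1..<n+1] w"
    using assms(1,2) by (intro Hform_polar) auto
  show "Bform n (polar n y) (\<lambda>i. pushv n y (w i))
      = (-1) ^ n * gfun n (y 1) * (\<Prod>i=2..n-1. sin (y i) ^ (n - i)) * dxs [2..<n+1] w"
    using assms by (intro Bform_polar) auto
qed

end
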